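(* The collinearity graph of $\mathcal{S}$ is connected and has diameter $3$.
   Context: Let $S=(P,L)$ and $S'=(P',L')$ be generalized quadrangles of order $(2,2)$ (every line has 3 points, every point lies on 3 lines, and for each point $x$ and line $l\not\ni x$ exactly one point of $l$ is collinear with $x$), with an isomorphism $x\mapsto x'$ from $S$ to $S'$. In a point-line geometry, $x^{\perp}$ is $x$ together with all points collinear with $x$, and $A^{\perp}=\bigcap_{a\in A}a^{\perp}$. A triad is a set of three pairwise non-collinear points, complete if $|T^{\perp}|=3$. The geometry $\mathcal{S}=(\mathcal{P},\mathcal{L})$ has point set $\mathcal{P}=\{(x,y')\in P\times P':y'\in x'^{\perp}\}$ and lines all $3$-subsets $\{(x,u'),(y,v'),(z,w')\}$ of $\mathcal{P}$ where $T=\{x,y,z\}$ (three distinct points) is a line or a complete triad of $S$ and $\{u',v',w'\}=T'^{\perp}$ in $S'$ with $u',v',w'$ distinct. The collinearity graph has vertex set $\mathcal{P}$, two distinct points adjacent when they lie on a common line. *)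

theory Defs
  imports Main
begin

definition collinear :: "'p set set \<Rightarrow> 'p \<Rightarrow> 'p \<Rightarrow> bool" where
  "collinear L x y \<longleftrightarrow> (\<exists>l\<in>L. x \<in> l \<and> y \<in> l)"

definition perp :: "'p set \<Rightarrow> 'p set set \<Rightarrow> 'p \<Rightarrow> 'p set" where
  "perp P L x = insert x {y \<in> P. collinear L x y}"

definition perpset :: "'p set \<Rightarrow> 'p set set \<Rightarrow> 'p set \<Rightarrow> 'p set" where
  "perpset P L A = {y \<in> P. \<forall>a\<in>A. y \<in> perp P L a}"

definition gq22 :: "'p set \<Rightarrow> 'p set set \<Rightarrow> bool" where
  "gq22 P L \<longleftrightarrow> P \<noteq> {} \<and>
     (\<forall>l\<in>L. l \<subseteq> P \<and> card l = 3) \<and>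
     (\<forall>x\<in>P. card {l\<in>L. x \<in> l} = 3) \<and>
     (\<forall>x\<in>P. \<forall>l\<in>L. x \<notin> l \<longrightarrow> (\<exists>!y. y \<in> l \<and> collinear L x y))"

definition triad :: "'p set set \<Rightarrow> 'p set \<Rightarrow> bool" where
  "triad L T \<longleftrightarrow> card T = 3 \<and> (\<forall>x\<in>T. \<forall>y\<in>T. x \<noteq> y \<longrightarrow> \<not> collinear L x y)"

definition complete_triad :: "'p set \<Rightarrow> 'p set set \<Rightarrow> 'p set \<Rightarrow> bool" where
  "complete_triad P L T \<longleftrightarrow> T \<subseteq> P \<and> triad L T \<and> card (perpset P L T) = 3"

definition geom_iso :: "('p \<Rightarrow> 'q) \<Rightarrow> 'p set \<Rightarrow> 'p set set \<Rightarrow> 'q set \<Rightarrow> 'q set set \<Rightarrow> bool" where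
  "geom_iso f P L P' L' \<longleftrightarrow> bij_betw f P P' \<and> (\<lambda>l. f ` l) ` L = L'"

definition bigP :: "'p set \<Rightarrow> 'p set set \<Rightarrow> 'q set \<Rightarrow> 'q set set \<Rightarrow> ('p \<Rightarrow> 'q) \<Rightarrow> ('p \<times> 'q) set" where
  "bigP P L P' L' f = {(x, y). x \<in> P \<and> y \<in> perp P' L' (f x)}"

definition bigL :: "'p set \<Rightarrow> 'p set set \<Rightarrow> 'q set \<Rightarrow> 'q set set \<Rightarrow> ('p \<Rightarrow> 'q) \<Rightarrow> ('p \<times> 'q) set set" where
  "bigL P L P' L' f =
    {{(x, u), (y, v), (z, w)} | x y z u v w.
       (x, u) \<in> bigP P L P' L' f \<and> (y, v) \<in> bigP P L P' L' f \<and> (z, w) \<in> bigP P L P' L' f \<and>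
       x \<noteq> y \<and> y \<noteq> z \<and> x \<noteq> z \<and>
       ({x, y, z} \<in> L \<or> complete_triad P L {x, y, z}) \<and>
       u \<noteq> v \<and> v \<noteq> w \<and> u \<noteq> w \<and>
       {u, v, w} = perpset P' L' (f ` {x, y, z})}"

definition coll_graph :: "'a set \<Rightarrow> 'a set set \<Rightarrow> 'a \<Rightarrow> 'a \<Rightarrow> bool" where
  "coll_graph V E a b \<longleftrightarrow> a \<in> V \<and> b \<in> V \<and> a \<noteq> b \<and> (\<exists>l\<in>E. a \<in> l \<and> b \<in> l)"

definition graph_connected :: "'a set \<Rightarrow> ('a \<Rightarrow> 'a \<Rightarrow> bool) \<Rightarrow> bool" where
  "graph_connected V adj \<longleftrightarrow> (\<forall>a\<in>V. \<forall>b\<in>V. \<exists>n. (adj ^^ n) a b)"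

definition graph_dist :: "('a \<Rightarrow> 'a \<Rightarrow> bool) \<Rightarrow> 'a \<Rightarrow> 'a \<Rightarrow> nat" where
  "graph_dist adj a b = (LEAST n. (adj ^^ n) a b)"

definition graph_diameter :: "'a set \<Rightarrow> ('a \<Rightarrow> 'a \<Rightarrow> bool) \<Rightarrow> nat \<Rightarrow> bool" where
  "graph_diameter V adj d \<longleftrightarrow>
     (\<forall>a\<in>V. \<forall>b\<in>V. graph_dist adj a b \<le> d) \<and> (\<exists>a\<in>V. \<exists>b\<in>V. graph_dist adj a b = d)"

end

theory Submission
  imports Defs
begin

(* Write y ~ x for y \<in> x\<^sup>\<bottom>. Two points (x, a'), (y, b') of \<S> are collinear iff x \<noteq> y,
   a \<noteq> b and a, b \<in> {x, y}\<^sup>\<bottom>: for x ~ y the line of \<S> comes from the line xy, and otherwise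
   from the complete triad {x, y, z}, where {x, y}\<^sup>\<bottom> = {a, b, c} and z is the third point of
   {a, b}\<^sup>\<bottom>, which lies in c\<^sup>\<bottom> because every point of GQ(2,2) is regular.
   In this graph on pairs, (x, a) and (y, b) are at distance at most 2 when x ~ b holds exactly
   when a ~ y; otherwise a suitable neighbour of (x, a), taken on the line xa when a \<noteq> x, restores
   this balance, so every distance is at most 3. For x, y non-collinear and b \<in> {x, y}\<^sup>\<bottom>, a middle vertex (q, d) of a
   path from (x, x) to (y, b) would have q and then d on the line xb with d ~ y, forcing d = b;
   so these two points are at distance 3. *)

lemma card_3_obtain_third:
  assumes "card S = 3" "a \<in> S" "b \<in> S" "a \<noteq> b"
  obtains c where "S = {a, b, c}" "c \<noteq> a" "c \<noteq> b"
  using assms unfolding card_3_iff by blast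

lemma card_3_other:
  assumes "card S = 3" "a \<in> S"
  obtains b where "b \<in> S" "b \<noteq> a"
  using assms unfolding card_3_iff by blast

lemma relpowp_inj_image_iff:
  assumes "inj_on h A"
    and S_dom: "\<And>m m'. S m m' \<Longrightarrow> m \<in> h ` A"
    and R_dom: "\<And>w w'. R w w' \<Longrightarrow> w \<in> A"
    and SR: "\<And>w w'. w \<in> A \<Longrightarrow> w' \<in> A \<Longrightarrow> S (h w) (h w') \<longleftrightarrow> R w w'"
    and "u \<in> A" "v \<in> A"
  shows "(S ^^ n) (h u) (h v) \<longleftrightarrow> (R ^^ n) u v"
  using \<open>v \<in> A\<close>
proof (induction n arbitrary: v)
  case 0
  then show ?case
    using inj_on_eq_iff[OF assms(1) \<open>u \<in> A\<close>] by simp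
next
  case (Suc n)
  show ?case
  proof
    assume "(S ^^ Suc n) (h u) (h v)"
    then obtain m where m: "(S ^^ n) (h u) m" "S m (h v)"
      by (rule relpowp_Suc_E)
    then obtain w where "w \<in> A" "m = h w"
      using S_dom by blast
    then show "(R ^^ Suc n) u v"
      using Suc m SR relpowp_Suc_I by metis
  next
    assume "(R ^^ Suc n) u v"
    then obtain w where w: "(R ^^ n) u w" "R w v"
      by (rule relpowp_Suc_E)
    then have "w \<in> A"
      using R_dom by blast
    then show "(S ^^ Suc n) (h u) (h v)"
      using Suc w SR relpowp_Suc_I by metis
  qed
qed

lemma connected_diameter_if_walks:
  assumes walks: "\<And>a b. a \<in> V \<Longrightarrow> b \<in> V \<Longrightarrow> \<exists>n\<le>d. (R ^^ n) a b"
    and "a \<in> V" "b \<in> V" and far: "\<And>n. n < d \<Longrightarrow> \<not> (R ^^ n) a b"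
  shows "graph_connected V R \<and> graph_diameter V R d"
proof -
  have dist: "graph_dist R a' b' \<le> d" if "a' \<in> V" "b' \<in> V" for a' b'
    using walks[OF that] Least_le[of "\<lambda>n. (R ^^ n) a' b'"] unfolding graph_dist_def
    by (meson le_trans)
  have "(R ^^ graph_dist R a b) a b"
    using walks[OF assms(2,3)] LeastI_ex[of "\<lambda>n. (R ^^ n) a b"] unfolding graph_dist_def
    by blast
  then have "graph_dist R a b = d"
    using dist[OF assms(2,3)] far by (meson le_neq_implies_less)
  then show ?thesis
    unfolding graph_connected_def graph_diameter_def using walks dist assms(2,3) by blast
qed

locale quadrangle22 =
  fixes P :: "'p set" and L :: "'p set set"
  assumes gq22: "gq22 P L"
begin

lemma line_subset: "l \<in> L \<Longrightarrow> l \<subseteq> P"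
  using gq22 unfolding gq22_def by simp

lemma card_line: "l \<in> L \<Longrightarrow> card l = 3"
  using gq22 unfolding gq22_def by simp

lemma card_lines_through: "x \<in> P \<Longrightarrow> card {l \<in> L. x \<in> l} = 3"
  using gq22 unfolding gq22_def by simp

lemma ex1_collinear_on_line: "x \<in> P \<Longrightarrow> l \<in> L \<Longrightarrow> x \<notin> l \<Longrightarrow> \<exists>!y. y \<in> l \<and> collinear L x y"
  using gq22 unfolding gq22_def by simp

lemma points_nonempty: "P \<noteq> {}"
  using gq22 unfolding gq22_def by simp

definition orth :: "'p \<Rightarrow> 'p \<Rightarrow> bool" where
  "orth x y \<longleftrightarrow> x \<in> P \<and> y \<in> P \<and> (x = y \<or> collinear L x y)"

lemma orthD: "orth x y \<Longrightarrow> x \<in> P \<and> y \<in> P"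
  unfolding orth_def by blast

lemma orth_sym: "orth x y \<Longrightarrow> orth y x"
  unfolding orth_def collinear_def by blast

lemma orth_commute: "orth x y \<longleftrightarrow> orth y x"
  using orth_sym by blast

lemma orth_refl: "x \<in> P \<Longrightarrow> orth x x"
  unfolding orth_def by blast

lemma orth_if_on_line: "l \<in> L \<Longrightarrow> x \<in> l \<Longrightarrow> y \<in> l \<Longrightarrow> orth x y"
  unfolding orth_def collinear_def using line_subset by fast

lemma line_through_orth:
  assumes "orth x y" "x \<noteq> y"
  obtains l where "l \<in> L" "x \<in> l" "y \<in> l"
  using assms unfolding orth_def collinear_def by blast

lemma orth_if_collinear: "x \<in> P \<Longrightarrow> y \<in> P \<Longrightarrow> collinear L x y \<Longrightarrow> orth x y"
  unfolding orth_def by blast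

lemma perpset_eq: "perpset P L T = {t \<in> P. \<forall>s\<in>T. orth t s}"
  unfolding perpset_def perp_def orth_def collinear_def using line_subset by fastforce

lemma mem_perpset_pair [simp]: "t \<in> perpset P L {x, y} \<longleftrightarrow> orth t x \<and> orth t y"
  unfolding perpset_eq using orthD by blast

lemma line_third_point:
  assumes "l \<in> L" "u \<in> l" "v \<in> l" "u \<noteq> v"
  obtains w where "l = {u, v, w}" "w \<noteq> u" "w \<noteq> v"
  by (rule card_3_obtain_third[OF card_line[OF assms(1)] assms(2-4)])

lemma line_other_point:
  assumes "l \<in> L" "x \<in> l"
  obtains y where "y \<in> l" "y \<noteq> x"
  by (rule card_3_other[OF card_line[OF assms(1)] assms(2)])

lemma projection_exists:
  assumes "l \<in> L" "w \<in> P" "w \<notin> l"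
  obtains s where "s \<in> l" "orth w s"
proof -
  obtain s where "s \<in> l" "collinear L w s"
    using ex1_collinear_on_line[OF assms(2,1,3)] by blast
  then show thesis
    using that orth_if_collinear assms(1,2) line_subset by blast
qed

lemma projection_unique:
  assumes "l \<in> L" "w \<notin> l" "s \<in> l" "t \<in> l" "orth w s" "orth w t"
  shows "s = t"
proof -
  have "w \<in> P" "collinear L w s" "collinear L w t"
    using assms unfolding orth_def by auto
  then show ?thesis
    using ex1_collinear_on_line[OF \<open>w \<in> P\<close> assms(1,2)] assms(3,4) by blast
qed

lemma on_line_if_orth_two:
  assumes "l \<in> L" "u \<in> l" "v \<in> l" "u \<noteq> v" "orth w u" "orth w v"
  shows "w \<in> l"
  using projection_unique[OF assms(1) _ assms(2,3,5,6)] assms(4) by blast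

lemma line_eq_if_two_common:
  assumes "l \<in> L" "m \<in> L" "u \<in> l" "v \<in> l" "u \<in> m" "v \<in> m" "u \<noteq> v"
  shows "l = m"
proof -
  have "m \<subseteq> l"
    using on_line_if_orth_two[OF assms(1,3,4,7)] orth_if_on_line[OF assms(2)] assms(5,6) by blast
  then show ?thesis
    using card_subset_eq card_line assms(1,2) by (metis card.infinite zero_neq_numeral)
qed

lemma line_two_points:
  assumes "l \<in> L"
  obtains u v where "u \<in> l" "v \<in> l" "u \<noteq> v"
  using card_line[OF assms] unfolding card_3_iff by blast

lemma perpset_line:
  assumes "l \<in> L"
  shows "perpset P L l = l"
proof -
  obtain u v where "u \<in> l" "v \<in> l" "u \<noteq> v"
    using line_two_points assms by blast
  then have "t \<in> l" if "\<forall>s\<in>l. orth t s" for t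
    using on_line_if_orth_two[OF assms] that by blast
  then show ?thesis
    unfolding perpset_eq using orth_if_on_line[OF assms] line_subset[OF assms] by blast
qed

lemma lines_through:
  assumes "x \<in> P"
  obtains l1 l2 l3 where "{l \<in> L. x \<in> l} = {l1, l2, l3}" "l1 \<noteq> l2" "l2 \<noteq> l3" "l1 \<noteq> l3"
  using card_lines_through[OF assms] unfolding card_3_iff by blast

lemma line_through_point: "x \<in> P \<Longrightarrow> \<exists>l\<in>L. x \<in> l"
  by (metis (mono_tags, lifting) insertI1 lines_through mem_Collect_eq)

lemma third_line_through:
  assumes "x \<in> P" "l1 \<in> L" "l2 \<in> L" "x \<in> l1" "x \<in> l2"
  obtains m where "m \<in> L" "x \<in> m" "m \<noteq> l1" "m \<noteq> l2"
proof -
  have l12: "l1 \<in> {l \<in> L. x \<in> l}" "l2 \<in> {l \<in> L. x \<in> l}"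
    using assms by simp_all
  note card = card_lines_through[OF assms(1)]
  show thesis
  proof (cases "l1 = l2")
    case True
    obtain m where "m \<in> {l \<in> L. x \<in> l}" "m \<noteq> l1"
      by (rule card_3_other[OF card l12(1)])
    then show thesis using that True by blast
  next
    case False
    obtain m where "{l \<in> L. x \<in> l} = {l1, l2, m}" "m \<noteq> l1" "m \<noteq> l2"
      by (rule card_3_obtain_third[OF card l12 False])
    then show thesis using that by (metis (no_types, lifting) insertCI mem_Collect_eq)
  qed
qed

lemma orth_on_lines_through:
  assumes "l1 \<in> L" "l2 \<in> L" "l3 \<in> L" "x \<in> l1" "x \<in> l2" "x \<in> l3"
    and "l1 \<noteq> l2" "l2 \<noteq> l3" "l1 \<noteq> l3" "orth x t"
  shows "t \<in> l1 \<or> t \<in> l2 \<or> t \<in> l3"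
proof (cases "t = x")
  case False
  then obtain m where m: "m \<in> L" "x \<in> m" "t \<in> m"
    using line_through_orth assms(10) by metis
  have card: "card {l \<in> L. x \<in> l} = 3"
    using card_lines_through orthD assms(10) by blast
  then have "finite {l \<in> L. x \<in> l}"
    by (intro card_ge_0_finite) simp
  moreover have "{l1, l2, l3} \<subseteq> {l \<in> L. x \<in> l}"
    using assms(1-6) by blast
  moreover have "card {l1, l2, l3} = 3"
    using assms(7-9) by simp
  ultimately have "{l1, l2, l3} = {l \<in> L. x \<in> l}"
    using card card_subset_eq by metis
  then show ?thesis using m by blast
qed (use assms in blast)

lemma card_perp_noncollinear:
  assumes "x \<in> P" "y \<in> P" "\<not> orth x y"
  shows "card (perpset P L {x, y}) = 3"
proof -
  obtain l1 l2 l3 where ls: "{l \<in> L. x \<in> l} = {l1, l2, l3}" "l1 \<noteq> l2" "l2 \<noteq> l3" "l1 \<noteq> l3"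
    using lines_through[OF assms(1)] by blast
  then have l: "l1 \<in> L" "l2 \<in> L" "l3 \<in> L" "x \<in> l1" "x \<in> l2" "x \<in> l3"
    by blast+
  have off: "y \<notin> l" if "l \<in> L" "x \<in> l" for l
    using orth_if_on_line that assms(3) by blast
  obtain s1 s2 s3 where s: "s1 \<in> l1" "s2 \<in> l2" "s3 \<in> l3" "orth y s1" "orth y s2" "orth y s3"
    using projection_exists[OF _ assms(2) off] l by metis
  have "perpset P L {x, y} = {s1, s2, s3}"
  proof
    show "perpset P L {x, y} \<subseteq> {s1, s2, s3}"
    proof
      fix t assume "t \<in> perpset P L {x, y}"
      then have t: "orth x t" "orth y t"
        using orth_sym by auto
      then have "t \<in> l1 \<or> t \<in> l2 \<or> t \<in> l3"
        using orth_on_lines_through[OF l ls(2-4)] by blast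
      then show "t \<in> {s1, s2, s3}"
        using projection_unique[OF _ off] l s t(2) by blast
    qed
    show "{s1, s2, s3} \<subseteq> perpset P L {x, y}"
      using orth_if_on_line l s orth_sym by auto
  qed
  moreover have "s1 \<noteq> s2 \<and> s2 \<noteq> s3 \<and> s1 \<noteq> s3"
  proof -
    have "s \<noteq> x" if "orth y s" for s
      using that assms(3) orth_sym by blast
    then show ?thesis
      using line_eq_if_two_common l s ls(2-4) by metis
  qed
  ultimately show ?thesis
    by simp
qed

lemma perp_noncollinear_third:
  assumes "\<not> orth x y" "a \<in> perpset P L {x, y}" "b \<in> perpset P L {x, y}" "a \<noteq> b"
  obtains c where "perpset P L {x, y} = {a, b, c}" "c \<noteq> a" "c \<noteq> b"
proof -
  have "x \<in> P" "y \<in> P"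
    using assms(2) orthD by auto
  then show thesis
    using card_3_obtain_third[OF card_perp_noncollinear] assms that by blast
qed

lemma perp_noncollinear_nonempty:
  assumes "x \<in> P" "y \<in> P" "\<not> orth x y"
  obtains t where "orth t x" "orth t y"
  using card_perp_noncollinear[OF assms] that by (metis card_3_iff insertCI mem_perpset_pair)

lemma perp_noncollinear_not_orth:
  assumes "\<not> orth x y" "orth a x" "orth a y" "orth b x" "orth b y" "a \<noteq> b"
  shows "\<not> orth a b"
proof
  assume "orth a b"
  then obtain l where l: "l \<in> L" "a \<in> l" "b \<in> l"
    using line_through_orth assms(6) by metis
  then have "x \<in> l" "y \<in> l"
    using on_line_if_orth_two[OF l assms(6)] assms(2-5) orth_sym by blast+
  then show False
    using orth_if_on_line[OF l(1)] assms(1) by blast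
qed

lemma orth_one_or_all_on_line:
  assumes "l \<in> L" "l = {u, v, w}" "u \<noteq> v" "v \<noteq> w" "u \<noteq> w" "t \<in> P"
  shows "orth t u \<or> orth t v \<or> orth t w"
    and "(orth t u \<and> orth t v) \<or> (orth t u \<and> orth t w) \<or> (orth t v \<and> orth t w)
      \<longrightarrow> orth t u \<and> orth t v \<and> orth t w"
proof -
  show "orth t u \<or> orth t v \<or> orth t w"
  proof (cases "t \<in> l")
    case True
    then show ?thesis using orth_if_on_line[OF assms(1)] assms(2) by blast
  next
    case False
    then show ?thesis using projection_exists[OF assms(1,6)] assms(2) by blast
  qed
  show "(orth t u \<and> orth t v) \<or> (orth t u \<and> orth t w) \<or> (orth t v \<and> orth t w)
      \<longrightarrow> orth t u \<and> orth t v \<and> orth t w"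
  proof
    assume "(orth t u \<and> orth t v) \<or> (orth t u \<and> orth t w) \<or> (orth t v \<and> orth t w)"
    then have "t \<in> l"
      using on_line_if_orth_two[OF assms(1)] assms(2-5) by blast
    then show "orth t u \<and> orth t v \<and> orth t w"
      using orth_if_on_line[OF assms(1)] assms(2) by blast
  qed
qed

lemma orth_one_of_three:
  assumes "orth z a" "orth z b" "orth z q" "orth z r" "a \<noteq> z" "b \<noteq> z" "q \<noteq> z"
    and "\<not> orth a b" "\<not> orth a q" "\<not> orth b q"
  shows "orth r a \<or> orth r b \<or> orth r q"
proof -
  obtain la lb lq where l: "la \<in> L" "lb \<in> L" "lq \<in> L" "z \<in> la" "z \<in> lb" "z \<in> lq"
    and "a \<in> la" "b \<in> lb" "q \<in> lq"
    using line_through_orth assms(1-3,5-7) by metis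
  moreover have "la \<noteq> lb" "lb \<noteq> lq" "la \<noteq> lq"
    using orth_if_on_line assms(8-10) calculation by metis+
  ultimately show ?thesis
    using orth_on_lines_through[OF l] assms(4) orth_if_on_line by metis
qed

lemma orth_perp_perp_noncollinear:
  assumes "\<not> orth x y" "perpset P L {x, y} = {a, b, c}" "a \<noteq> b" "b \<noteq> c" "a \<noteq> c"
    and "z \<in> perpset P L {a, b}" "\<not> orth z x" "\<not> orth z y"
  shows "orth z c"
proof (rule ccontr)
  assume nzc: "\<not> orth z c"
  have abc: "orth a x" "orth a y" "orth b x" "orth b y" "orth c x" "orth c y"
    using assms(2) by (metis insertCI mem_perpset_pair)+
  have nab: "\<not> orth a b"
    using perp_noncollinear_not_orth[OF assms(1)] abc assms(3) by blast
  have z: "orth z a" "orth z b" "z \<in> P"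
    using assms(6) orthD by auto
  have "c \<noteq> x" "c \<noteq> y"
    using abc assms(1) orth_sym by blast+
  then obtain lx ly where lx: "lx \<in> L" "c \<in> lx" "x \<in> lx" and ly: "ly \<in> L" "c \<in> ly" "y \<in> ly"
    using line_through_orth abc(5,6) by metis
  obtain q where q: "lx = {c, x, q}" "q \<noteq> c" "q \<noteq> x"
    using line_third_point[OF lx \<open>c \<noteq> x\<close>] by blast
  obtain r where r: "ly = {c, y, r}" "r \<noteq> c" "r \<noteq> y"
    using line_third_point[OF ly \<open>c \<noteq> y\<close>] by blast
  note on_lx = orth_one_or_all_on_line[OF lx(1) q(1) \<open>c \<noteq> x\<close> q(3)[symmetric] q(2)[symmetric]]
  note on_ly = orth_one_or_all_on_line[OF ly(1) r(1) \<open>c \<noteq> y\<close> r(3)[symmetric] r(2)[symmetric]]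
  have "orth z q" "orth z r"
    using on_lx(1)[OF z(3)] on_ly(1)[OF z(3)] nzc assms(7,8) by blast+
  moreover have "\<not> orth t q" "\<not> orth t r" if "t \<in> {a, b}" for t
  proof -
    have "t \<in> P" "orth t x" "orth t y" "\<not> orth t c"
      using that abc orthD assms(2-5) perp_noncollinear_not_orth[OF assms(1)] by auto
    then show "\<not> orth t q" "\<not> orth t r"
      using on_lx(2) on_ly(2) by blast+
  qed
  moreover have "a \<noteq> z" "b \<noteq> z" "q \<noteq> z"
    using z abc assms(7) nzc q(1) orth_if_on_line[OF lx(1)] by blast+
  ultimately have "orth r q"
    using orth_one_of_three[of z a b q r] z nab orth_sym by blast
  then have "r \<in> lx"
    using on_line_if_orth_two[OF lx(1,2)] q r(1) orth_if_on_line[OF ly(1)] by auto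
  then have "lx = ly"
    using line_eq_if_two_common[OF lx(1) ly(1) lx(2)] ly(2) r by auto
  then show False
    using orth_if_on_line[OF ly(1)] lx(3) ly(3) assms(1) by blast
qed

lemma regular_noncollinear:
  assumes "x \<in> P" "y \<in> P" "\<not> orth x y" "perpset P L {x, y} = {a, b, c}"
    and "a \<noteq> b" "b \<noteq> c" "a \<noteq> c"
  obtains z where "z \<noteq> x" "z \<noteq> y" "orth z a" "orth z b" "orth z c"
proof -
  have abc: "orth a x" "orth a y" "orth b x" "orth b y"
    using assms(4) by (metis insertCI mem_perpset_pair)+
  have nab: "\<not> orth a b"
    using perp_noncollinear_not_orth[OF assms(3)] abc assms(5) by blast
  have "x \<in> perpset P L {a, b}" "y \<in> perpset P L {a, b}" "x \<noteq> y"
    using abc orth_sym assms(1,3) orth_refl by auto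
  then obtain z where "perpset P L {a, b} = {x, y, z}" "z \<noteq> x" "z \<noteq> y"
    using perp_noncollinear_third[OF nab] by metis
  then have z: "z \<in> perpset P L {a, b}" "z \<noteq> x" "z \<noteq> y"
    by auto
  then have "\<not> orth z x" "\<not> orth z y"
    using perp_noncollinear_not_orth[OF nab] abc orth_sym by (metis mem_perpset_pair)+
  then show thesis
    using that z orth_perp_perp_noncollinear[OF assms(3-7) z(1)] by simp
qed

lemma complete_triad_noncollinear:
  assumes "x \<in> P" "y \<in> P" "\<not> orth x y" "perpset P L {x, y} = {a, b, c}"
    and "a \<noteq> b" "b \<noteq> c" "a \<noteq> c"
  obtains z where "z \<noteq> x" "z \<noteq> y" "complete_triad P L {x, y, z}"
    and "perpset P L {x, y, z} = {a, b, c}"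
proof -
  obtain z where z: "z \<noteq> x" "z \<noteq> y" "orth z a" "orth z b" "orth z c"
    using regular_noncollinear[OF assms] by blast
  have abc: "orth t x" "orth t y" if "t \<in> {a, b, c}" for t
    using that unfolding assms(4)[symmetric] by simp_all
  have "\<not> orth a b"
    using perp_noncollinear_not_orth[OF assms(3)] abc assms(5) by blast
  moreover have "orth x a" "orth x b" "orth y a" "orth y b"
    using abc orth_sym by blast+
  ultimately have nz: "\<not> orth x z" "\<not> orth y z"
    using perp_noncollinear_not_orth z(1-4) orth_sym by metis+
  have "perpset P L {x, y, z} = perpset P L {x, y} \<inter> {t. orth t z}"
    unfolding perpset_eq using orthD by auto
  also have "\<dots> = {a, b, c}"
    using assms(4) z orth_sym by auto
  finally have T: "perpset P L {x, y, z} = {a, b, c}" .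
  have "z \<in> P" "x \<noteq> y"
    using orthD z(3) assms(1,3) orth_refl by blast+
  have "\<not> orth s t" if "s \<in> {x, y, z}" "t \<in> {x, y, z}" "s \<noteq> t" for s t
    using that assms(3) nz by (auto simp: orth_commute)
  then have "\<not> collinear L s t" if "s \<in> {x, y, z}" "t \<in> {x, y, z}" "s \<noteq> t" for s t
    using that orth_if_collinear assms(1,2) \<open>z \<in> P\<close> by blast
  then have "complete_triad P L {x, y, z}"
    unfolding complete_triad_def triad_def T
    using assms(1,2,5-7) \<open>z \<in> P\<close> \<open>x \<noteq> y\<close> z(1,2) by auto
  then show thesis
    using that z(1,2) T by blast
qed

text \<open>The pair \<open>(x, a)\<close> with \<^term>\<open>orth a x\<close> stands for the point \<open>(x, a')\<close> of \<open>\<S>\<close>.\<close>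
definition pair_adj :: "'p \<times> 'p \<Rightarrow> 'p \<times> 'p \<Rightarrow> bool" where
  "pair_adj = (\<lambda>(x, a) (y, b). x \<noteq> y \<and> a \<noteq> b \<and> orth a x \<and> orth a y \<and> orth b x \<and> orth b y)"

lemma pair_adj_Pair [simp]:
  "pair_adj (x, a) (y, b) \<longleftrightarrow> x \<noteq> y \<and> a \<noteq> b \<and> orth a x \<and> orth a y \<and> orth b x \<and> orth b y"
  unfolding pair_adj_def by simp

lemma pair_adj_sym: "pair_adj v w \<Longrightarrow> pair_adj w v"
  by (cases v; cases w) auto

lemma pair_adj_swap: "pair_adj (a, x) (b, y) \<longleftrightarrow> pair_adj (x, a) (y, b)"
  using orth_commute by auto

definition within2 :: "'p \<times> 'p \<Rightarrow> 'p \<times> 'p \<Rightarrow> bool" where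
  "within2 v w \<longleftrightarrow> v = w \<or> pair_adj v w \<or> (\<exists>u. pair_adj v u \<and> pair_adj u w)"

lemma within2_via: "pair_adj v u \<Longrightarrow> pair_adj u w \<Longrightarrow> within2 v w"
  unfolding within2_def by blast

lemma within2_sym: "within2 v w \<Longrightarrow> within2 w v"
  unfolding within2_def using pair_adj_sym by blast

lemma within2_swap: "within2 (x, a) (y, b) \<Longrightarrow> within2 (a, x) (b, y)"
  unfolding within2_def using pair_adj_swap by (metis surj_pair prod.inject)

lemma within2_iff_relpowp: "within2 v w \<longleftrightarrow> (\<exists>n\<le>2. (pair_adj ^^ n) v w)"
proof -
  have "(\<exists>n\<le>2. (pair_adj ^^ n) v w) \<longleftrightarrow>
      (pair_adj ^^ 0) v w \<or> (pair_adj ^^ 1) v w \<or> (pair_adj ^^ 2) v w"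
    by (auto simp: le_Suc_eq numeral_2_eq_2 simp del: relpowp.simps relpowp_1)
  moreover have "(pair_adj ^^ 2) v w \<longleftrightarrow> (\<exists>u. pair_adj v u \<and> pair_adj u w)"
    by (simp add: numeral_2_eq_2 OO_def del: pair_adj_Pair)
  ultimately show ?thesis
    unfolding within2_def by (simp add: OO_def)
qed

lemma within2_same_point_noncollinear:
  assumes "orth a x" "orth b x" "a \<noteq> b" "\<not> orth a b"
  shows "within2 (x, a) (x, b)"
proof -
  have x: "x \<in> perpset P L {a, b}"
    using orth_sym[OF assms(1)] orth_sym[OF assms(2)] by simp
  obtain q where q: "q \<in> perpset P L {a, b}" "q \<noteq> x"
    using card_3_other[OF card_perp_noncollinear x] assms orthD by metis
  then have "\<not> orth x q"
    using perp_noncollinear_not_orth[OF assms(4)] x by auto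
  moreover have "a \<in> perpset P L {x, q}" "b \<in> perpset P L {x, q}"
    using q assms orth_sym by auto
  ultimately obtain d where "perpset P L {x, q} = {a, b, d}" "d \<noteq> a" "d \<noteq> b"
    using perp_noncollinear_third assms(3) by metis
  then have "pair_adj (x, a) (q, d)" "pair_adj (q, d) (x, b)"
    using q assms orth_sym by (auto simp: set_eq_iff)
  then show ?thesis
    by (rule within2_via)
qed

lemma within2_same_point:
  assumes "orth a x" "orth b x"
  shows "within2 (x, a) (x, b)"
proof -
  have from_self: "within2 (x, x) (x, b)" if b: "orth b x" "b \<noteq> x" for b
  proof -
    obtain l where l: "l \<in> L" "x \<in> l" "b \<in> l"
      using line_through_orth[OF orth_sym[OF b(1)]] b(2) by metis
    obtain w where "l = {x, b, w}" "w \<noteq> x" "w \<noteq> b"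
      using line_third_point[OF l] b(2) by metis
    then have "pair_adj (x, x) (w, w)" "pair_adj (w, w) (x, b)"
      using orth_if_on_line[OF l(1)] by auto
    then show ?thesis
      by (rule within2_via)
  qed
  consider "a = b" | "a \<noteq> b" "a = x" | "a \<noteq> b" "b = x" | "a \<noteq> x" "b \<noteq> x" "orth a b"
    | "a \<noteq> b" "\<not> orth a b"
    by blast
  then show ?thesis
  proof cases
    case 1
    then show ?thesis unfolding within2_def by simp
  next
    case 2
    then show ?thesis using from_self[OF assms(2)] by simp
  next
    case 3
    then show ?thesis using within2_sym[OF from_self[OF assms(1)]] by simp
  next
    case 4
    then have "pair_adj (x, a) (a, x)" "pair_adj (a, x) (x, b)"
      using assms orth_sym orth_refl orthD by auto
    then show ?thesis
      by (rule within2_via)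
  next
    case 5
    then show ?thesis
      using within2_same_point_noncollinear assms by blast
  qed
qed

lemma within2_same_partner:
  assumes "orth a x" "orth a y"
  shows "within2 (x, a) (y, a)"
  using within2_swap[OF within2_same_point] assms orth_sym by blast

lemma within2_if_orth_cross:
  assumes "orth a x" "orth b y" "orth b x" "orth a y"
  shows "within2 (x, a) (y, b)"
proof (cases "x = y")
  case True
  then show ?thesis using within2_same_point assms by blast
next
  case False
  show ?thesis
  proof (cases "a = b")
    case True
    then show ?thesis using within2_same_partner assms by blast
  next
    case False
    then show ?thesis using \<open>x \<noteq> y\<close> assms unfolding within2_def by simp
  qed
qed

lemma within2_if_not_orth_cross_nondiagonal:
  assumes "orth a x" "orth b y" "\<not> orth b x" "\<not> orth a y" "a \<noteq> x"
  shows "within2 (x, a) (y, b)"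
proof -
  obtain l where l: "l \<in> L" "a \<in> l" "x \<in> l"
    using line_through_orth assms(1,5) by metis
  have "y \<notin> l" "b \<notin> l"
    using orth_if_on_line[OF l(1)] l(2,3) assms(3,4) by blast+
  then obtain d q where "d \<in> l" "orth y d" "q \<in> l" "orth b q"
    using projection_exists[OF l(1)] orthD assms(2) by metis
  then have "pair_adj (x, a) (q, d)" "pair_adj (q, d) (y, b)"
    using orth_if_on_line[OF l(1)] l \<open>y \<notin> l\<close> \<open>b \<notin> l\<close> assms orth_sym by auto
  then show ?thesis
    by (rule within2_via)
qed

lemma within2_if_not_orth_cross:
  assumes "orth a x" "orth b y" "\<not> orth b x" "\<not> orth a y"
  shows "within2 (x, a) (y, b)"
proof -
  consider "a \<noteq> x" | "b \<noteq> y" | "a = x" "b = y"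
    by blast
  then show ?thesis
  proof cases
    case 1
    then show ?thesis using within2_if_not_orth_cross_nondiagonal assms by blast
  next
    case 2
    then show ?thesis using within2_sym within2_if_not_orth_cross_nondiagonal assms by blast
  next
    case 3
    then obtain t where "orth t x" "orth t y"
      using perp_noncollinear_nonempty assms orthD by metis
    then have "pair_adj (x, x) (t, t)" "pair_adj (t, t) (y, y)"
      using 3 assms orth_sym orth_refl orthD by auto
    then show ?thesis
      using 3 within2_via by blast
  qed
qed

lemma within2_if_balanced:
  assumes "orth a x" "orth b y" "orth b x \<longleftrightarrow> orth a y"
  shows "within2 (x, a) (y, b)"
  using within2_if_orth_cross within2_if_not_orth_cross assms by blast

lemma pair_adj_to_balanced:
  assumes "orth a x" "orth b y" "\<not> (orth b x \<longleftrightarrow> orth a y)"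
  obtains p c where "orth c p" "pair_adj (x, a) (p, c)" "orth b p \<longleftrightarrow> orth c y"
proof (cases "a = x")
  case True
  have "x \<in> P" "y \<in> P" "b \<in> P"
    using assms orthD by auto
  then show thesis
    using that[of b b] that[of y y] True assms orth_sym orth_refl by (cases "orth b x") auto
next
  case False
  obtain l where l: "l \<in> L" "x \<in> l" "a \<in> l"
    using line_through_orth assms(1) False orth_sym by metis
  obtain z where z: "l = {x, a, z}" "z \<noteq> x" "z \<noteq> a"
    using line_third_point[OF l] False by metis
  have "y \<in> P" "b \<in> P"
    using assms orthD by auto
  note y = orth_one_or_all_on_line[OF l(1) z(1) False[symmetric] z(3)[symmetric] z(2)[symmetric]
      \<open>y \<in> P\<close>, unfolded orth_commute[of y]]
  note b = orth_one_or_all_on_line[OF l(1) z(1) False[symmetric] z(3)[symmetric] z(2)[symmetric]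
      \<open>b \<in> P\<close>]
  have "(orth b a \<longleftrightarrow> orth x y) \<or> (orth b a \<longleftrightarrow> orth z y) \<or> (orth b z \<longleftrightarrow> orth x y)
      \<or> (orth b z \<longleftrightarrow> orth z y)"
    using y b assms(3) by argo
  moreover have "pair_adj (x, a) (a, x)" "pair_adj (x, a) (a, z)" "pair_adj (x, a) (z, x)"
    "pair_adj (x, a) (z, z)" "orth x a" "orth z a" "orth x z" "orth z z"
    using orth_if_on_line[OF l(1)] z False by auto
  ultimately show thesis
    using that[of x a] that[of z a] that[of x z] that[of z z] by blast
qed

lemma pair_walk_le3:
  assumes "orth a x" "orth b y"
  shows "\<exists>n\<le>3. (pair_adj ^^ n) (x, a) (y, b)"
proof (cases "orth b x \<longleftrightarrow> orth a y")
  case True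
  then obtain n where "n \<le> 2" "(pair_adj ^^ n) (x, a) (y, b)"
    using within2_if_balanced[OF assms] within2_iff_relpowp by blast
  then show ?thesis
    by (intro exI[of _ n]) simp
next
  case False
  then obtain p c where pc: "orth c p" "pair_adj (x, a) (p, c)" "orth b p \<longleftrightarrow> orth c y"
    using pair_adj_to_balanced[OF assms] by blast
  then obtain n where n: "n \<le> 2" "(pair_adj ^^ n) (p, c) (y, b)"
    using within2_if_balanced[OF pc(1) assms(2)] within2_iff_relpowp by blast
  then have "(pair_adj ^^ Suc n) (x, a) (y, b)"
    using relpowp_Suc_I2[of pair_adj, OF pc(2)] by blast
  then show ?thesis
    using n(1) by (intro exI[of _ "Suc n"]) simp
qed

lemma not_within2_from_diagonal:
  assumes "\<not> orth x y" "orth b x" "orth b y"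
  shows "\<not> within2 (x, x) (y, b)"
proof
  assume "within2 (x, x) (y, b)"
  moreover have "x \<noteq> y"
    using assms orth_refl orthD by blast
  ultimately obtain q d where "pair_adj (x, x) (q, d)" "pair_adj (q, d) (y, b)"
    using assms(1) unfolding within2_def by auto
  then have q: "q \<noteq> x" "orth q x" "orth q b" and d: "orth d x" "orth d q" "orth d y" "d \<noteq> b"
    using orth_sym by auto
  have "b \<noteq> x"
    using assms by blast
  then obtain l where l: "l \<in> L" "b \<in> l" "x \<in> l"
    using line_through_orth assms(2) by metis
  have "q \<in> l"
    using on_line_if_orth_two[OF l(1,3,2)] \<open>b \<noteq> x\<close> q by metis
  then have "d \<in> l"
    using on_line_if_orth_two[OF l(1,3)] q(1) d(1,2) by metis
  moreover have "y \<notin> l"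
    using orth_if_on_line[OF l(1) l(3)] assms(1) by blast
  ultimately show False
    using projection_unique[OF l(1) _ _ l(2)] d(3,4) assms(3) orth_sym by blast
qed

lemma noncollinear_pair_exists:
  obtains x y b where "\<not> orth x y" "orth b x" "orth b y"
proof -
  obtain x where x: "x \<in> P"
    using points_nonempty by blast
  obtain l where l: "l \<in> L" "x \<in> l"
    using line_through_point[OF x] by blast
  obtain p where p: "p \<in> l" "p \<noteq> x"
    using line_other_point[OF l] by blast
  have "p \<in> P"
    using line_subset l(1) p(1) by blast
  then obtain m where m: "m \<in> L" "p \<in> m" "m \<noteq> l"
    by (metis third_line_through[OF _ l(1) l(1) p(1) p(1)])
  obtain y where y: "y \<in> m" "y \<noteq> p"
    using line_other_point[OF m(1,2)] by blast
  have "y \<notin> l"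
    using line_eq_if_two_common[OF l(1) m(1) p(1) _ m(2) y(1)] y(2) m(3) by blast
  moreover have "orth y x \<Longrightarrow> y \<in> l"
    using on_line_if_orth_two[OF l(1,2) p(1) p(2)[symmetric]] orth_if_on_line[OF m(1) y(1) m(2)]
    by blast
  ultimately have "\<not> orth x y"
    using orth_commute by blast
  then show thesis
    using that orth_if_on_line[OF l(1) p(1) l(2)] orth_if_on_line[OF m(1,2) y(1)] by blast
qed

lemma pair_adj_line_or_triad:
  assumes "pair_adj (x, a) (y, b)"
  obtains z c where "z \<noteq> x" "z \<noteq> y" "c \<noteq> a" "c \<noteq> b"
    and "{x, y, z} \<in> L \<or> complete_triad P L {x, y, z}" "perpset P L {x, y, z} = {a, b, c}"
proof (cases "orth x y")
  case True
  have ab: "x \<noteq> y" "a \<noteq> b" "orth a x" "orth a y" "orth b x" "orth b y"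
    using assms by auto
  then obtain l where l: "l \<in> L" "x \<in> l" "y \<in> l"
    using line_through_orth True by metis
  obtain z where z: "l = {x, y, z}" "z \<noteq> x" "z \<noteq> y"
    using line_third_point[OF l ab(1)] by blast
  have "a \<in> l" "b \<in> l"
    using on_line_if_orth_two[OF l ab(1)] ab by blast+
  then obtain c where "l = {a, b, c}" "c \<noteq> a" "c \<noteq> b"
    using line_third_point[OF l(1)] ab(2) by blast
  then show thesis
    using that z l(1) perpset_line[OF l(1)] by auto
next
  case False
  have ab: "a \<noteq> b" "a \<in> perpset P L {x, y}" "b \<in> perpset P L {x, y}"
    using assms by auto
  then obtain c where c: "perpset P L {x, y} = {a, b, c}" "c \<noteq> a" "c \<noteq> b"
    using perp_noncollinear_third False by metis
  have "x \<in> P" "y \<in> P"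
    using ab(2) orthD by auto
  then obtain z where "z \<noteq> x" "z \<noteq> y" "complete_triad P L {x, y, z}" "perpset P L {x, y, z} = {a, b, c}"
    using complete_triad_noncollinear False c(1) ab(1) c(2,3) by metis
  then show thesis
    using that c(2,3) by blast
qed

end

lemma bigL_two_pointsD:
  assumes "l \<in> bigL P L P' L' f" "(x, u) \<in> l" "(y, v) \<in> l" "(x, u) \<noteq> (y, v)"
  shows "x \<noteq> y \<and> u \<noteq> v \<and> u \<in> perp P' L' (f y) \<and> v \<in> perp P' L' (f x)"
proof -
  obtain x1 y1 z1 u1 v1 w1 where l: "l = {(x1, u1), (y1, v1), (z1, w1)}"
    and "x1 \<noteq> y1" "y1 \<noteq> z1" "x1 \<noteq> z1" "u1 \<noteq> v1" "v1 \<noteq> w1" "u1 \<noteq> w1"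
    and perp: "{u1, v1, w1} = perpset P' L' (f ` {x1, y1, z1})"
    using assms(1) unfolding bigL_def by blast
  then have "x \<noteq> y \<and> u \<noteq> v \<and> x \<in> {x1, y1, z1} \<and> y \<in> {x1, y1, z1} \<and> u \<in> {u1, v1, w1} \<and> v \<in> {u1, v1, w1}"
    using assms(2-4) by auto
  then show ?thesis
    unfolding perp perpset_def by blast
qed

lemma bigL_memI:
  assumes "(x, u) \<in> bigP P L P' L' f" "(y, v) \<in> bigP P L P' L' f" "(z, w) \<in> bigP P L P' L' f"
    and "x \<noteq> y" "y \<noteq> z" "x \<noteq> z" "{x, y, z} \<in> L \<or> complete_triad P L {x, y, z}"
    and "u \<noteq> v" "v \<noteq> w" "u \<noteq> w" "{u, v, w} = perpset P' L' (f ` {x, y, z})"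
  shows "{(x, u), (y, v), (z, w)} \<in> bigL P L P' L' f"
  unfolding bigL_def using assms by blast

locale quadrangle22_iso = quadrangle22 P L for P :: "'p set" and L +
  fixes P' :: "'q set" and L' :: "'q set set" and f :: "'p \<Rightarrow> 'q"
  assumes iso: "geom_iso f P L P' L'"
begin

abbreviation S_points :: "('p \<times> 'q) set" where
  "S_points \<equiv> bigP P L P' L' f"

abbreviation S_adj :: "'p \<times> 'q \<Rightarrow> 'p \<times> 'q \<Rightarrow> bool" where
  "S_adj \<equiv> coll_graph (bigP P L P' L' f) (bigL P L P' L' f)"

lemma inj_on_points: "inj_on f P"
  and image_points: "f ` P = P'"
  and image_lines: "(\<lambda>l. f ` l) ` L = L'"
  using iso unfolding geom_iso_def bij_betw_def by auto

lemma collinear_image_iff: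
  assumes "x \<in> P" "y \<in> P"
  shows "collinear L' (f x) (f y) \<longleftrightarrow> collinear L x y"
proof
  assume "collinear L' (f x) (f y)"
  then obtain l where l: "l \<in> L" "f x \<in> f ` l" "f y \<in> f ` l"
    using image_lines unfolding collinear_def by blast
  then have "x \<in> l" "y \<in> l"
    using inj_on_image_mem_iff[OF inj_on_points _ line_subset[OF l(1)]] assms by blast+
  then show "collinear L x y"
    unfolding collinear_def using l(1) by blast
next
  assume "collinear L x y"
  then show "collinear L' (f x) (f y)"
    using image_lines unfolding collinear_def by blast
qed

lemma perp_image_iff:
  assumes "x \<in> P" "a \<in> P"
  shows "f a \<in> perp P' L' (f x) \<longleftrightarrow> orth a x"
  using collinear_image_iff[OF assms] inj_on_eq_iff[OF inj_on_points assms(2,1)] image_points assms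
  unfolding perp_def orth_def collinear_def by auto

lemma perpset_image:
  assumes "T \<subseteq> P"
  shows "perpset P' L' (f ` T) = f ` perpset P L T"
proof (intro equalityI subsetI)
  fix u assume u: "u \<in> perpset P' L' (f ` T)"
  then have "u \<in> P'"
    unfolding perpset_def by blast
  then obtain t where t: "t \<in> P" "u = f t"
    using image_points by blast
  then have "\<forall>s\<in>T. orth t s"
    using u perp_image_iff assms unfolding perpset_def by blast
  then show "u \<in> f ` perpset P L T"
    using t unfolding perpset_eq by blast
next
  fix u assume "u \<in> f ` perpset P L T"
  then obtain t where t: "t \<in> P" "\<forall>s\<in>T. orth t s" "u = f t"
    unfolding perpset_eq by blast
  then show "u \<in> perpset P' L' (f ` T)"
    unfolding perpset_def using image_points perp_image_iff assms by blast
qed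

lemma mem_S_points: "orth a x \<Longrightarrow> (x, f a) \<in> S_points"
  unfolding bigP_def using perp_image_iff orthD by blast

lemma S_pointsE:
  assumes "v \<in> S_points"
  obtains x a where "v = (x, f a)" "orth a x"
proof -
  obtain x u where v: "v = (x, u)" "x \<in> P" "u \<in> perp P' L' (f x)"
    using assms unfolding bigP_def by blast
  then have "u \<in> P'"
    using image_points unfolding perp_def by blast
  then obtain a where "a \<in> P" "u = f a"
    using image_points by blast
  then show thesis
    using that v perp_image_iff by blast
qed

lemma S_points_eq: "S_points = map_prod id f ` {(x, a). orth a x}"
proof (intro equalityI subsetI)
  fix v assume "v \<in> S_points"
  then obtain x a where "v = (x, f a)" "orth a x"
    by (rule S_pointsE)
  then show "v \<in> map_prod id f ` {(x, a). orth a x}"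
    by (intro image_eqI[of _ _ "(x, a)"]) auto
next
  fix v assume "v \<in> map_prod id f ` {(x, a). orth a x}"
  then show "v \<in> S_points"
    using mem_S_points by auto
qed

lemma inj_on_pairs: "inj_on (map_prod id f) {(x, a). orth a x}"
  by (rule inj_on_subset[OF map_prod_inj_on[OF inj_on_id[of P] inj_on_points]]) (auto dest: orthD)

lemma S_adj_imp_pair_adj:
  assumes "orth a x" "orth b y" "S_adj (x, f a) (y, f b)"
  shows "pair_adj (x, a) (y, b)"
proof -
  obtain l where "l \<in> bigL P L P' L' f" "(x, f a) \<in> l" "(y, f b) \<in> l" "(x, f a) \<noteq> (y, f b)"
    using assms(3) unfolding coll_graph_def by blast
  then have "x \<noteq> y \<and> f a \<noteq> f b \<and> f a \<in> perp P' L' (f y) \<and> f b \<in> perp P' L' (f x)"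
    by (rule bigL_two_pointsD)
  moreover have "x \<in> P" "y \<in> P" "a \<in> P" "b \<in> P"
    using assms(1,2) orthD by auto
  ultimately show ?thesis
    using perp_image_iff[of y a] perp_image_iff[of x b] assms(1,2) by auto
qed

lemma pair_adj_imp_S_adj:
  assumes "pair_adj (x, a) (y, b)"
  shows "S_adj (x, f a) (y, f b)"
proof -
  obtain z c where zc: "z \<noteq> x" "z \<noteq> y" "c \<noteq> a" "c \<noteq> b"
    and T: "{x, y, z} \<in> L \<or> complete_triad P L {x, y, z}" "perpset P L {x, y, z} = {a, b, c}"
    by (rule pair_adj_line_or_triad[OF assms])
  have orth: "orth a x" "orth a y" "orth b x" "orth b y" "orth c z"
    using assms T(2) unfolding perpset_eq by auto
  then have TP: "{x, y, z} \<subseteq> P" "{a, b, c} \<subseteq> P"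
    using orthD by auto
  have fne: "f a \<noteq> f b" "f b \<noteq> f c" "f a \<noteq> f c"
    using inj_on_eq_iff[OF inj_on_points] TP assms zc by auto
  have fperp: "{f a, f b, f c} = perpset P' L' (f ` {x, y, z})"
    using perpset_image[OF TP(1)] T(2) by simp
  have pts: "(x, f a) \<in> S_points" "(y, f b) \<in> S_points" "(z, f c) \<in> S_points"
    using orth mem_S_points by auto
  have "x \<noteq> y"
    using assms by simp
  have "{(x, f a), (y, f b), (z, f c)} \<in> bigL P L P' L' f"
    by (rule bigL_memI[OF pts \<open>x \<noteq> y\<close> zc(2)[symmetric] zc(1)[symmetric] T(1) fne fperp])
  then show ?thesis
    unfolding coll_graph_def using \<open>x \<noteq> y\<close> pts(1,2) by blast
qed

lemma S_adj_relpowp_iff: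
  assumes "orth a x" "orth b y"
  shows "(S_adj ^^ n) (x, f a) (y, f b) \<longleftrightarrow> (pair_adj ^^ n) (x, a) (y, b)"
proof -
  let ?A = "{(x, a). orth a x}"
  have "(S_adj ^^ n) (map_prod id f (x, a)) (map_prod id f (y, b)) \<longleftrightarrow> (pair_adj ^^ n) (x, a) (y, b)"
  proof (rule relpowp_inj_image_iff[OF inj_on_pairs])
    show "m \<in> map_prod id f ` ?A" if "S_adj m m'" for m m'
    proof -
      have "m \<in> S_points"
        using that unfolding coll_graph_def by blast
      then show ?thesis
        unfolding S_points_eq .
    qed
    show "w \<in> ?A" if "pair_adj w w'" for w w'
      using that by (cases w, cases w') simp
    show "S_adj (map_prod id f w) (map_prod id f w') \<longleftrightarrow> pair_adj w w'"
      if w: "w \<in> ?A" "w' \<in> ?A" for w w'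
    proof -
      obtain x a y b where "w = (x, a)" "w' = (y, b)" "orth a x" "orth b y"
        using w by blast
      then show ?thesis
        using S_adj_imp_pair_adj pair_adj_imp_S_adj by (simp only: map_prod_simp id_apply) blast
    qed
    show "(x, a) \<in> ?A" "(y, b) \<in> ?A"
      using assms by simp_all
  qed
  then show ?thesis
    by simp
qed

lemma S_walk_le3:
  assumes "v \<in> S_points" "w \<in> S_points"
  shows "\<exists>n\<le>3. (S_adj ^^ n) v w"
proof -
  obtain x a y b where "v = (x, f a)" "orth a x" "w = (y, f b)" "orth b y"
    using S_pointsE[OF assms(1)] S_pointsE[OF assms(2)] by metis
  then show ?thesis
    using pair_walk_le3 S_adj_relpowp_iff by simp
qed

lemma S_no_short_walk:
  assumes "\<not> orth x y" "orth b x" "orth b y" "n < 3"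
  shows "\<not> (S_adj ^^ n) (x, f x) (y, f b)"
proof -
  have "\<not> (pair_adj ^^ n) (x, x) (y, b)"
    using not_within2_from_diagonal[OF assms(1-3)] assms(4) unfolding within2_iff_relpowp by auto
  then show ?thesis
    using S_adj_relpowp_iff[OF orth_refl assms(3)] orthD[OF assms(2)] by blast
qed

end

theorem corollary3p4:
  fixes P :: "'p set" and L :: "'p set set" and P' :: "'q set" and L' :: "'q set set"
    and f :: "'p \<Rightarrow> 'q"
  assumes "gq22 P L" and "gq22 P' L'" and "geom_iso f P L P' L'"
  shows "graph_connected (bigP P L P' L' f) (coll_graph (bigP P L P' L' f) (bigL P L P' L' f))
       \<and> graph_diameter (bigP P L P' L' f) (coll_graph (bigP P L P' L' f) (bigL P L P' L' f)) 3"
proof -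
  interpret quadrangle22_iso P L P' L' f
    using assms(1,3) by unfold_locales
  obtain x y b where far: "\<not> orth x y" "orth b x" "orth b y"
    by (rule noncollinear_pair_exists)
  show ?thesis
  proof (rule connected_diameter_if_walks)
    show "\<exists>n\<le>3. (S_adj ^^ n) v w" if "v \<in> S_points" "w \<in> S_points" for v w
      using S_walk_le3 that by blast
    show "(x, f x) \<in> S_points" "(y, f b) \<in> S_points"
      using mem_S_points far orth_refl orthD by blast+
    show "\<not> (S_adj ^^ n) (x, f x) (y, f b)" if "n < 3" for n
      using S_no_short_walk far that by blast
  qed
qed

end
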